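(* For the single-choice constraint $\mathcal{F}=\{S\subseteq E:|S|\le1\}$ and every product distribution $D$ of the element weights, $$\lim_{M\to\infty}\textsf{EoR}(\mathcal{F},M^D)=\textsf{PbM}(\mathcal{F},D).$$
   Context: Setting: $E$ is a finite ground set; each $e\in E$ has a nonnegative weight $w_e\sim D_e$, independently, the $D_e$ having no point masses, $D=\times_e D_e$. Elements arrive one by one in a fixed order with their realized weights; an online algorithm (knowing the distribution, possibly randomized) decides immediately and irrevocably upon each arrival whether to accept, keeping the accepted set in $\mathcal{F}$. $f(\boldsymbol{w})=\max_{e}w_e$; $\boldsymbol{w}(\textsf{ALG}(\boldsymbol{w}))$ is the weight of the set selected by $\textsf{ALG}$. For a product distribution $P$, $\textsf{EoR}(\mathcal{F},P)=\sup_{\textsf{ALG}}\mathbf{E}_{\boldsymbol{w}\sim P}[\boldsymbol{w}(\textsf{ALG}(\boldsymbol{w}))/f(\boldsymbol{w})]$ and $\textsf{PbM}(\mathcal{F},P)=\sup_{\textsf{ALG}}\Pr_{\boldsymbol{w}\sim P}[\boldsymbol{w}(\textsf{ALG}(\boldsymbol{w}))=f(\boldsymbol{w})]$. For $M>0$, $M^D$ is the product distribution of $(M^{w_1},\dots,M^{w_{|E|}})$ where $\boldsymbol{w}\sim D$. *)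

theory Defs
  imports "HOL-Probability.Probability"
begin

text \<open>Ground set E = {..<n}; elements arrive in the order 0, 1, ..., n-1.
  Weight vectors are functions nat => real (only the values on {..<n} matter).\<close>

definition single_choice :: "nat \<Rightarrow> nat set set" where
  "single_choice n = {S. S \<subseteq> {..<n} \<and> card S \<le> 1}"

text \<open>A (randomized) online algorithm for the single-choice constraint, in behavioral
  form: p i w is the probability of accepting element i, given that nothing has been
  accepted yet; it may depend only on the weights revealed so far (w 0, ..., w i),
  and is measurable.  After one acceptance the algorithm must reject everything
  (otherwise the accepted set would leave F).\<close>
definition online_alg :: "nat \<Rightarrow> (nat \<Rightarrow> (nat \<Rightarrow> real) \<Rightarrow> real) \<Rightarrow> bool" where
  "online_alg n p \<longleftrightarrow>
     (\<forall>i<n. (\<forall>w. 0 \<le> p i w \<and> p i w \<le> 1)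
          \<and> (\<forall>w w'. (\<forall>j\<le>i. w j = w' j) \<longrightarrow> p i w = p i w')
          \<and> p i \<in> borel_measurable (PiM {..<n} (\<lambda>_. borel)))"

definition accept_prob :: "(nat \<Rightarrow> (nat \<Rightarrow> real) \<Rightarrow> real) \<Rightarrow> (nat \<Rightarrow> real) \<Rightarrow> nat \<Rightarrow> real" where
  "accept_prob p w i = p i w * (\<Prod>j<i. (1 - p j w))"

definition fmax :: "nat \<Rightarrow> (nat \<Rightarrow> real) \<Rightarrow> real" where
  "fmax n w = Max (w ` {..<n})"

definition alg_ratio :: "nat \<Rightarrow> (nat \<Rightarrow> (nat \<Rightarrow> real) \<Rightarrow> real) \<Rightarrow> (nat \<Rightarrow> real) \<Rightarrow> real" where
  "alg_ratio n p w = (\<Sum>i<n. accept_prob p w i * w i) / fmax n w"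

text \<open>Probability (over the algorithm's randomness) that w(ALG(w)) = f(w):
  either it selects some i with w i = f(w), or it selects nothing and f(w) = 0.\<close>
definition alg_hit :: "nat \<Rightarrow> (nat \<Rightarrow> (nat \<Rightarrow> real) \<Rightarrow> real) \<Rightarrow> (nat \<Rightarrow> real) \<Rightarrow> real" where
  "alg_hit n p w =
     (\<Sum>i<n. accept_prob p w i * (if w i = fmax n w then 1 else 0))
     + (1 - (\<Sum>i<n. accept_prob p w i)) * (if fmax n w = 0 then 1 else 0)"

definition EoR :: "nat \<Rightarrow> (nat \<Rightarrow> real) measure \<Rightarrow> real" where
  "EoR n P = (SUP p \<in> {p. online_alg n p}. \<integral>w. alg_ratio n p w \<partial>P)"

definition PbM :: "nat \<Rightarrow> (nat \<Rightarrow> real) measure \<Rightarrow> real" where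
  "PbM n P = (SUP p \<in> {p. online_alg n p}. \<integral>w. alg_hit n p w \<partial>P)"

definition prod_dist :: "nat \<Rightarrow> (nat \<Rightarrow> real measure) \<Rightarrow> (nat \<Rightarrow> real) measure" where
  "prod_dist n D = PiM {..<n} D"

definition pow_dist :: "real \<Rightarrow> nat \<Rightarrow> (nat \<Rightarrow> real measure) \<Rightarrow> (nat \<Rightarrow> real) measure" where
  "pow_dist M n D = PiM {..<n} (\<lambda>e. distr (D e) borel (\<lambda>x. M powr x))"

end

theory Submission
  imports Defs
begin

(* Write the weights of M^D as M^w with w ~ D.  Reading the weights through x \<mapsto> M powr x turns
   an algorithm for D into one for M^D with the same acceptance probabilities, and log M goes
   back, so both suprema range over the same algorithms.  On M^w the ratio w(ALG)/f(w) is
   \<Sum>i acc_i(w) M^(w_i - f(w)): the maximal elements contribute exactly the probability of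
   selecting the maximum (as f(w) \<noteq> 0 almost surely), and the remaining mass
   \<Sum>_{w_i < f(w)} M^(w_i - f(w)) is at most n and tends to 0 as M \<rightarrow> \<infinity>.  Hence
   PbM(D) \<le> EoR(M^D) \<le> PbM(D) + o(1) by dominated convergence. *)

type_synonym alg = "nat \<Rightarrow> (nat \<Rightarrow> real) \<Rightarrow> real"

abbreviation weight_space :: "nat \<Rightarrow> (nat \<Rightarrow> real) measure" where
  "weight_space n \<equiv> PiM {..<n} (\<lambda>_. borel)"

lemma online_alg_bounds: "online_alg n p \<Longrightarrow> i < n \<Longrightarrow> 0 \<le> p i w \<and> p i w \<le> 1"
  by (auto simp: online_alg_def)

lemma accept_prob_bounds:
  assumes "\<And>j. j \<le> i \<Longrightarrow> 0 \<le> p j w \<and> p j w \<le> 1"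
  shows "0 \<le> accept_prob p w i \<and> accept_prob p w i \<le> 1"
proof -
  have "0 \<le> (\<Prod>j<i. 1 - p j w) \<and> (\<Prod>j<i. 1 - p j w) \<le> 1"
    using assms by (auto intro!: prod_nonneg prod_le_1)
  with assms[of i] show ?thesis
    unfolding accept_prob_def by (auto intro: mult_le_one)
qed

lemma sum_accept_prob:
  assumes "\<And>i. i < k \<Longrightarrow> 0 \<le> p i w \<and> p i w \<le> 1"
  shows "(\<Sum>i<k. accept_prob p w i) = 1 - (\<Prod>i<k. 1 - p i w)"
  using assms by (induction k) (auto simp: accept_prob_def algebra_simps)

lemma sum_accept_prob_bounds:
  assumes "\<And>i. i < k \<Longrightarrow> 0 \<le> p i w \<and> p i w \<le> 1"
  shows "0 \<le> (\<Sum>i<k. accept_prob p w i) \<and> (\<Sum>i<k. accept_prob p w i) \<le> 1"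
proof -
  have "0 \<le> (\<Prod>i<k. 1 - p i w) \<and> (\<Prod>i<k. 1 - p i w) \<le> 1"
    using assms by (auto intro!: prod_nonneg prod_le_1)
  then show ?thesis
    using sum_accept_prob[of k p w] assms by simp
qed

lemma sum_accept_prob_weighted_bounds:
  assumes "\<And>i. i < k \<Longrightarrow> 0 \<le> p i w \<and> p i w \<le> 1"
    and "\<And>i. i < k \<Longrightarrow> 0 \<le> c i \<and> c i \<le> 1"
  shows "0 \<le> (\<Sum>i<k. accept_prob p w i * c i)
    \<and> (\<Sum>i<k. accept_prob p w i * c i) \<le> (\<Sum>i<k. accept_prob p w i)"
proof -
  have "0 \<le> accept_prob p w i \<and> accept_prob p w i \<le> 1" if "i < k" for i
    using that assms(1) by (intro accept_prob_bounds) auto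
  with assms(2) show ?thesis
    by (auto intro!: sum_nonneg sum_mono mult_left_le)
qed

lemma alg_hit_bounds:
  assumes "online_alg n p"
  shows "0 \<le> alg_hit n p w \<and> alg_hit n p w \<le> 1"
proof -
  note bounds = online_alg_bounds[OF assms]
  have "0 \<le> (\<Sum>i<n. accept_prob p w i * (if w i = fmax n w then 1 else 0))
    \<and> (\<Sum>i<n. accept_prob p w i * (if w i = fmax n w then 1 else 0)) \<le> (\<Sum>i<n. accept_prob p w i)"
    using bounds by (intro sum_accept_prob_weighted_bounds) auto
  with sum_accept_prob_bounds[of n p w] bounds show ?thesis
    unfolding alg_hit_def by auto
qed

lemma fmax_ge: "i < n \<Longrightarrow> w i \<le> fmax n w"
  by (auto simp: fmax_def)

lemma fmax_attained:
  assumes "0 < n"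
  shows "\<exists>i<n. fmax n w = w i"
proof -
  have "fmax n w \<in> w ` {..<n}"
    unfolding fmax_def using assms by (intro Max_in) auto
  then show ?thesis by auto
qed

lemma fmax_compose_mono:
  assumes "mono g" "0 < n"
  shows "fmax n (compose {..<n} g w) = g (fmax n w)"
proof -
  have "compose {..<n} g w ` {..<n} = g ` w ` {..<n}"
    by (auto simp: compose_def image_image)
  moreover have "w ` {..<n} \<noteq> {}"
    using assms(2) by auto
  ultimately show ?thesis
    unfolding fmax_def using mono_Max_commute[OF assms(1), of "w ` {..<n}"] by simp
qed

lemma measurable_fmax [measurable]: "fmax n \<in> borel_measurable (weight_space n)"
  unfolding fmax_def by measurable

lemma measurable_accept_prob:
  assumes "online_alg n p" "i < n"
  shows "(\<lambda>w. accept_prob p w i) \<in> borel_measurable (weight_space n)"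
  using assms unfolding accept_prob_def online_alg_def
  by (intro borel_measurable_times borel_measurable_prod borel_measurable_diff) auto

lemma measurable_alg_ratio:
  "online_alg n p \<Longrightarrow> alg_ratio n p \<in> borel_measurable (weight_space n)"
  using measurable_accept_prob[of n p] unfolding alg_ratio_def by measurable

lemma measurable_alg_hit:
  "online_alg n p \<Longrightarrow> alg_hit n p \<in> borel_measurable (weight_space n)"
  using measurable_accept_prob[of n p] unfolding alg_hit_def by measurable

definition map_alg :: "nat \<Rightarrow> (real \<Rightarrow> real) \<Rightarrow> alg \<Rightarrow> alg" where
  "map_alg n g p = (\<lambda>i w. p i (compose {..<n} g w))"

lemma online_alg_map_alg:
  assumes g: "g \<in> borel_measurable borel" and p: "online_alg n p"
  shows "online_alg n (map_alg n g p)"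
  unfolding online_alg_def
proof (intro allI impI conjI)
  fix i and w :: "nat \<Rightarrow> real" assume i: "i < n"
  show "0 \<le> map_alg n g p i w" "map_alg n g p i w \<le> 1"
    using online_alg_bounds[OF p i] by (auto simp: map_alg_def)
  have [measurable]: "p i \<in> borel_measurable (weight_space n)"
    using p i by (simp add: online_alg_def)
  note g [measurable]
  show "map_alg n g p i \<in> borel_measurable (weight_space n)"
    unfolding map_alg_def compose_def by measurable
next
  fix i and w w' :: "nat \<Rightarrow> real" assume "i < n" "\<forall>j\<le>i. w j = w' j"
  then show "map_alg n g p i w = map_alg n g p i w'"
    using p unfolding online_alg_def map_alg_def compose_def by auto
qed

lemma accept_prob_map_alg_inverse:
  assumes "\<And>x. h (g x) = x" "online_alg n p" "i < n"
  shows "accept_prob (map_alg n g (map_alg n h p)) w i = accept_prob p w i"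
proof -
  have "map_alg n g (map_alg n h p) j w = p j w" if "j \<le> i" for j
    using assms that unfolding online_alg_def map_alg_def compose_def by auto
  then show ?thesis
    unfolding accept_prob_def by simp
qed

(* w(ALG)/f(w) on the weights M^w, for an algorithm p that reads the exponents w *)
definition soft_hit :: "nat \<Rightarrow> real \<Rightarrow> alg \<Rightarrow> (nat \<Rightarrow> real) \<Rightarrow> real" where
  "soft_hit n M p w = (\<Sum>i<n. accept_prob p w i * M powr (w i - fmax n w))"

definition submax_mass :: "nat \<Rightarrow> real \<Rightarrow> (nat \<Rightarrow> real) \<Rightarrow> real" where
  "submax_mass n M w = (\<Sum>i<n. if w i = fmax n w then 0 else M powr (w i - fmax n w))"

lemma alg_ratio_compose_powr:
  assumes "1 \<le> M" "0 < n"
  shows "alg_ratio n p (compose {..<n} (\<lambda>x. M powr x) w)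
    = soft_hit n M (map_alg n (\<lambda>x. M powr x) p) w"
proof -
  have "mono (\<lambda>x. M powr x)"
    using assms(1) by (auto intro!: monoI powr_mono)
  note fmax_powr = fmax_compose_mono[OF this assms(2)]
  show ?thesis
    unfolding alg_ratio_def soft_hit_def fmax_powr sum_divide_distrib
    by (intro sum.cong refl) (simp add: accept_prob_def map_alg_def compose_def powr_diff)
qed

lemma powr_diff_fmax_bounds:
  assumes "1 \<le> M" "i < n"
  shows "0 \<le> M powr (w i - fmax n w) \<and> M powr (w i - fmax n w) \<le> 1"
  using powr_mono[of "w i - fmax n w" 0 M] fmax_ge[OF assms(2), of w] assms(1) by simp

lemma soft_hit_bounds:
  assumes "1 \<le> M" "online_alg n p"
  shows "0 \<le> soft_hit n M p w \<and> soft_hit n M p w \<le> 1"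
  using sum_accept_prob_weighted_bounds[of n p w "\<lambda>i. M powr (w i - fmax n w)"]
    sum_accept_prob_bounds[of n p w] online_alg_bounds[OF assms(2)] powr_diff_fmax_bounds[OF assms(1)]
  unfolding soft_hit_def by fastforce

lemma soft_hit_le_alg_hit_add_submax_mass:
  assumes "1 \<le> M" "online_alg n p"
  shows "soft_hit n M p w \<le> alg_hit n p w + submax_mass n M w"
proof -
  note bounds = online_alg_bounds[OF assms(2)]
  have "soft_hit n M p w \<le> (\<Sum>i<n. accept_prob p w i * (if w i = fmax n w then 1 else 0))
      + submax_mass n M w"
    unfolding soft_hit_def submax_mass_def sum.distrib[symmetric]
  proof (intro sum_mono)
    fix i assume "i \<in> {..<n}"
    then have "0 \<le> accept_prob p w i \<and> accept_prob p w i \<le> 1"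
      using bounds by (intro accept_prob_bounds) auto
    then show "accept_prob p w i * M powr (w i - fmax n w)
      \<le> accept_prob p w i * (if w i = fmax n w then 1 else 0)
        + (if w i = fmax n w then 0 else M powr (w i - fmax n w))"
      using assms(1) by (auto intro: mult_left_le_one_le)
  qed
  then show ?thesis
    using sum_accept_prob_bounds[of n p w] bounds unfolding alg_hit_def by auto
qed

lemma alg_hit_le_soft_hit:
  assumes "M \<noteq> 0" "online_alg n p" "fmax n w \<noteq> 0"
  shows "alg_hit n p w \<le> soft_hit n M p w"
  unfolding alg_hit_def soft_hit_def using assms(3)
proof (simp, intro sum_mono)
  fix i assume "i \<in> {..<n}"
  then have "0 \<le> accept_prob p w i"
    using online_alg_bounds[OF assms(2)] by (simp add: accept_prob_bounds)
  then show "accept_prob p w i * (if w i = fmax n w then 1 else 0)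
      \<le> accept_prob p w i * M powr (w i - fmax n w)"
    using assms(1) by auto
qed

lemma submax_mass_bounds:
  assumes "1 \<le> M"
  shows "0 \<le> submax_mass n M w \<and> submax_mass n M w \<le> n"
proof -
  have "0 \<le> submax_mass n M w"
    unfolding submax_mass_def by (intro sum_nonneg) auto
  moreover have "submax_mass n M w \<le> (\<Sum>i<n. 1)"
    unfolding submax_mass_def using powr_diff_fmax_bounds[OF assms] by (intro sum_mono) auto
  ultimately show ?thesis by simp
qed

lemma submax_mass_tendsto_0: "((\<lambda>M. submax_mass n M w) \<longlongrightarrow> 0) at_top"
  unfolding submax_mass_def
proof (intro tendsto_null_sum)
  fix i assume "i \<in> {..<n}"
  then have "w i \<noteq> fmax n w \<Longrightarrow> w i - fmax n w < 0"
    using fmax_ge[of i n w] by auto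
  then show "((\<lambda>M. if w i = fmax n w then 0 else M powr (w i - fmax n w)) \<longlongrightarrow> 0) at_top"
    by (cases "w i = fmax n w") (auto intro: tendsto_neg_powr[OF _ filterlim_ident])
qed

lemma measurable_soft_hit:
  "online_alg n p \<Longrightarrow> soft_hit n M p \<in> borel_measurable (weight_space n)"
  using measurable_accept_prob[of n p] unfolding soft_hit_def by measurable

lemma measurable_submax_mass: "submax_mass n M \<in> borel_measurable (weight_space n)"
  unfolding submax_mass_def by measurable

lemma PiM_distr_eq_distr_compose:
  fixes D :: "'i \<Rightarrow> real measure" and g :: "real \<Rightarrow> real"
  assumes "finite I" "\<And>i. i \<in> I \<Longrightarrow> prob_space (D i)"
    and "\<And>i. i \<in> I \<Longrightarrow> sets (D i) = sets borel"
    and g: "g \<in> borel_measurable borel"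
  shows "PiM I (\<lambda>i. distr (D i) borel g)
    = distr (PiM I D) (PiM I (\<lambda>_. borel)) (compose I g)"
proof -
  \<comment> \<open>the library lemma wants probability spaces as targets; R has the Borel sets\<close>
  define R where "R = return borel (0::real)"
  have "g \<in> measurable (D i) R" if "i \<in> I" for i
    using g assms(3)[OF that] unfolding R_def
    by (subst measurable_cong_sets[of _ borel _ borel]) auto
  then have distr_R:
      "distr (PiM I D) (PiM I (\<lambda>_. R)) (compose I g) = PiM I (\<lambda>i. distr (D i) R g)"
    using assms(1,2) by (intro distr_PiM_finite_prob_space') (auto simp: R_def prob_space_return)
  have "PiM I (\<lambda>i. distr (D i) borel g) = PiM I (\<lambda>i. distr (D i) R g)"
    by (intro PiM_cong refl distr_cong) (simp_all add: R_def)
  also have "\<dots> = distr (PiM I D) (PiM I (\<lambda>_. R)) (compose I g)"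
    by (rule distr_R[symmetric])
  also have "\<dots> = distr (PiM I D) (PiM I (\<lambda>_. borel)) (compose I g)"
    by (intro distr_cong sets_PiM_cong) (simp_all add: R_def)
  finally show ?thesis .
qed

lemma online_alg_nonempty: "{p. online_alg n p} \<noteq> {}"
proof -
  have "online_alg n (\<lambda>i w. 0)"
    by (simp add: online_alg_def)
  then show ?thesis by blast
qed

locale nonzero_weight_distribution =
  fixes n :: nat and D :: "nat \<Rightarrow> real measure"
  assumes n_pos: "0 < n"
    and prob_space_D: "\<And>e. e < n \<Longrightarrow> prob_space (D e)"
    and sets_D: "\<And>e. e < n \<Longrightarrow> sets (D e) = sets borel"
    and no_atom_at_0: "\<And>e. e < n \<Longrightarrow> measure (D e) {0} = 0"
begin

sublocale prob_space "prod_dist n D"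
  unfolding prod_dist_def using prob_space_D by (intro prob_space_PiM) auto

lemma measurable_prod_dist:
  assumes "f \<in> measurable (weight_space n) N"
  shows "f \<in> measurable (prod_dist n D) N"
proof -
  have "sets (prod_dist n D) = sets (weight_space n)"
    unfolding prod_dist_def using sets_D by (intro sets_PiM_cong) auto
  with assms show ?thesis
    using measurable_cong_sets by blast
qed

lemma integrable_prod_dist:
  fixes f :: "(nat \<Rightarrow> real) \<Rightarrow> real"
  assumes "f \<in> borel_measurable (weight_space n)" "\<And>w. 0 \<le> f w \<and> f w \<le> B"
  shows "integrable (prod_dist n D) f"
  using assms by (intro integrable_const_bound[where B=B] measurable_prod_dist) auto

lemma pow_dist_eq_distr:
  "pow_dist M n D = distr (prod_dist n D) (weight_space n) (compose {..<n} (\<lambda>x. M powr x))"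
  unfolding pow_dist_def prod_dist_def using prob_space_D sets_D
  by (intro PiM_distr_eq_distr_compose) auto

lemma integral_alg_ratio_pow_dist:
  assumes "1 \<le> M" "online_alg n p"
  shows "(\<integral>w. alg_ratio n p w \<partial>pow_dist M n D)
    = (\<integral>w. soft_hit n M (map_alg n (\<lambda>x. M powr x) p) w \<partial>prod_dist n D)"
proof -
  have "compose {..<n} (\<lambda>x. M powr x) \<in> measurable (prod_dist n D) (weight_space n)"
    unfolding compose_def by (intro measurable_prod_dist) measurable
  then show ?thesis
    unfolding pow_dist_eq_distr
    using measurable_alg_ratio[OF assms(2)] alg_ratio_compose_powr[OF assms(1) n_pos]
    by (simp add: integral_distr)
qed

lemma AE_fmax_nonzero: "AE w in prod_dist n D. fmax n w \<noteq> 0"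
proof -
  have "AE x in D e. x \<noteq> 0" if "e < n" for e
  proof (rule AE_I')
    show "{0} \<in> null_sets (D e)"
      using that prob_space_D[OF that] no_atom_at_0[OF that] sets_D[OF that]
      by (simp add: null_sets_def finite_measure.emeasure_eq_measure prob_space.finite_measure)
  qed auto
  then have "AE w in prod_dist n D. \<forall>e\<in>{..<n}. w e \<noteq> 0"
    unfolding prod_dist_def using prob_space_D
    by (intro AE_finite_allI AE_PiM_component) auto
  then show ?thesis
    by eventually_elim (metis fmax_attained[OF n_pos] lessThan_iff)
qed

lemma integral_alg_hit_le_1:
  assumes "online_alg n p"
  shows "(\<integral>w. alg_hit n p w \<partial>prod_dist n D) \<le> 1"
  using assms measurable_alg_hit alg_hit_bounds
  by (intro integral_le_const integrable_prod_dist[where B=1]) auto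

lemma integral_alg_ratio_pow_dist_le_1:
  assumes "1 \<le> M" "online_alg n p"
  shows "(\<integral>w. alg_ratio n p w \<partial>pow_dist M n D) \<le> 1"
proof -
  have "online_alg n (map_alg n (\<lambda>x. M powr x) p)"
    using assms(2) by (intro online_alg_map_alg) auto
  then show ?thesis
    unfolding integral_alg_ratio_pow_dist[OF assms]
    using assms(1) measurable_soft_hit soft_hit_bounds
    by (intro integral_le_const integrable_prod_dist[where B=1]) auto
qed

lemma PbM_le_EoR_pow_dist:
  assumes M: "1 < M"
  shows "PbM n (prod_dist n D) \<le> EoR n (pow_dist M n D)"
  unfolding PbM_def EoR_def
proof (intro cSUP_mono online_alg_nonempty)
  show "bdd_above ((\<lambda>p. \<integral>w. alg_ratio n p w \<partial>pow_dist M n D) ` {p. online_alg n p})"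
    using M integral_alg_ratio_pow_dist_le_1 by (intro bdd_aboveI2[where M=1]) auto
next
  fix q assume "q \<in> {p. online_alg n p}"
  then have q: "online_alg n q" by simp
  define p where "p = map_alg n (log M) q"
  have p: "online_alg n p"
    unfolding p_def using q by (intro online_alg_map_alg) auto
  have "(\<integral>w. alg_hit n q w \<partial>prod_dist n D) \<le> (\<integral>w. soft_hit n M q w \<partial>prod_dist n D)"
  proof (intro integral_mono_AE)
    show "integrable (prod_dist n D) (alg_hit n q)"
      using q measurable_alg_hit alg_hit_bounds by (intro integrable_prod_dist[where B=1])
    show "integrable (prod_dist n D) (soft_hit n M q)"
      using q M measurable_soft_hit soft_hit_bounds by (intro integrable_prod_dist[where B=1]) auto
    show "AE w in prod_dist n D. alg_hit n q w \<le> soft_hit n M q w"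
      using AE_fmax_nonzero by eventually_elim (use M q alg_hit_le_soft_hit in auto)
  qed
  also have "\<dots> = (\<integral>w. soft_hit n M (map_alg n (\<lambda>x. M powr x) p) w \<partial>prod_dist n D)"
    using M q unfolding p_def soft_hit_def by (simp add: accept_prob_map_alg_inverse)
  also have "\<dots> = (\<integral>w. alg_ratio n p w \<partial>pow_dist M n D)"
    using M p by (simp add: integral_alg_ratio_pow_dist)
  finally show "\<exists>p\<in>{p. online_alg n p}.
      (\<integral>w. alg_hit n q w \<partial>prod_dist n D) \<le> (\<integral>w. alg_ratio n p w \<partial>pow_dist M n D)"
    using p by blast
qed

lemma EoR_pow_dist_le_PbM_add:
  assumes M: "1 \<le> M"
  shows "EoR n (pow_dist M n D)
    \<le> PbM n (prod_dist n D) + (\<integral>w. submax_mass n M w \<partial>prod_dist n D)"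
  unfolding EoR_def
proof (intro cSUP_least online_alg_nonempty)
  fix p assume "p \<in> {p. online_alg n p}"
  then have p: "online_alg n p" by simp
  define q where "q = map_alg n (\<lambda>x. M powr x) p"
  have q: "online_alg n q"
    unfolding q_def using p by (intro online_alg_map_alg) auto
  have int_hit: "integrable (prod_dist n D) (alg_hit n q)"
    using q measurable_alg_hit alg_hit_bounds by (intro integrable_prod_dist[where B=1])
  have int_submax: "integrable (prod_dist n D) (submax_mass n M)"
    using M measurable_submax_mass submax_mass_bounds by (intro integrable_prod_dist[where B=n])
  have "(\<integral>w. alg_ratio n p w \<partial>pow_dist M n D) = (\<integral>w. soft_hit n M q w \<partial>prod_dist n D)"
    unfolding q_def using M p by (rule integral_alg_ratio_pow_dist)
  also have "\<dots> \<le> (\<integral>w. alg_hit n q w + submax_mass n M w \<partial>prod_dist n D)"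
  proof (rule integral_mono)
    show "integrable (prod_dist n D) (soft_hit n M q)"
      using M q measurable_soft_hit soft_hit_bounds by (intro integrable_prod_dist[where B=1])
    show "integrable (prod_dist n D) (\<lambda>w. alg_hit n q w + submax_mass n M w)"
      using int_hit int_submax by (rule Bochner_Integration.integrable_add)
    show "soft_hit n M q w \<le> alg_hit n q w + submax_mass n M w" for w
      using M q by (rule soft_hit_le_alg_hit_add_submax_mass)
  qed
  also have "\<dots> = (\<integral>w. alg_hit n q w \<partial>prod_dist n D) + (\<integral>w. submax_mass n M w \<partial>prod_dist n D)"
    using int_hit int_submax by (rule Bochner_Integration.integral_add)
  also have "(\<integral>w. alg_hit n q w \<partial>prod_dist n D) \<le> PbM n (prod_dist n D)"
    unfolding PbM_def using q integral_alg_hit_le_1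
    by (intro cSUP_upper bdd_aboveI2[where M=1]) auto
  finally show "(\<integral>w. alg_ratio n p w \<partial>pow_dist M n D)
      \<le> PbM n (prod_dist n D) + (\<integral>w. submax_mass n M w \<partial>prod_dist n D)"
    by simp
qed

lemma integral_submax_mass_tendsto_0:
  "((\<lambda>M. \<integral>w. submax_mass n M w \<partial>prod_dist n D) \<longlongrightarrow> 0) at_top"
proof -
  have "((\<lambda>M. \<integral>w. submax_mass n M w \<partial>prod_dist n D) \<longlongrightarrow> (\<integral>w. 0 \<partial>prod_dist n D)) at_top"
  proof (rule integral_dominated_convergence_at_top[where w="\<lambda>_. real n"])
    show "submax_mass n M \<in> borel_measurable (prod_dist n D)" for M
      using measurable_submax_mass by (rule measurable_prod_dist)
    show "\<forall>\<^sub>F M in at_top. AE w in prod_dist n D. norm (submax_mass n M w) \<le> real n"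
      using eventually_ge_at_top[of "1::real"] by eventually_elim (simp add: submax_mass_bounds)
    show "AE w in prod_dist n D. ((\<lambda>M. submax_mass n M w) \<longlongrightarrow> 0) at_top"
      using submax_mass_tendsto_0 by simp
  qed simp_all
  then show ?thesis by simp
qed

lemma EoR_pow_dist_tendsto_PbM:
  "((\<lambda>M. EoR n (pow_dist M n D)) \<longlongrightarrow> PbM n (prod_dist n D)) at_top"
proof (rule tendsto_sandwich[OF _ _ tendsto_const])
  show "\<forall>\<^sub>F M in at_top. PbM n (prod_dist n D) \<le> EoR n (pow_dist M n D)"
    using eventually_gt_at_top[of "1::real"] by eventually_elim (rule PbM_le_EoR_pow_dist)
  show "\<forall>\<^sub>F M in at_top. EoR n (pow_dist M n D)
      \<le> PbM n (prod_dist n D) + (\<integral>w. submax_mass n M w \<partial>prod_dist n D)"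
    using eventually_ge_at_top[of "1::real"] by eventually_elim (rule EoR_pow_dist_le_PbM_add)
  show "((\<lambda>M. PbM n (prod_dist n D) + (\<integral>w. submax_mass n M w \<partial>prod_dist n D))
      \<longlongrightarrow> PbM n (prod_dist n D)) at_top"
    using tendsto_add[OF tendsto_const integral_submax_mass_tendsto_0] by simp
qed

end

theorem proposition4:
  fixes n :: nat and D :: "nat \<Rightarrow> real measure"
  assumes "0 < n"
    and "\<forall>e<n. prob_space (D e)"
    and "\<forall>e<n. sets (D e) = sets borel"
    and "\<forall>e<n. AE x in D e. 0 \<le> x"
    and "\<forall>e<n. \<forall>x. measure (D e) {x} = 0"
  shows "((\<lambda>M. EoR n (pow_dist M n D)) \<longlongrightarrow> PbM n (prod_dist n D)) at_top"
proof -
  have "nonzero_weight_distribution n D"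
    using assms(1,2,3,5) by (simp add: nonzero_weight_distribution_def)
  then interpret nonzero_weight_distribution n D .
  show ?thesis
    by (rule EoR_pow_dist_tendsto_PbM)
qed

end
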